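(* If a Moksha-Patam board has no chute-barrier (i.e. there is no cell $c$ such that $c,c+1,\dots,c+5$ are all entrances of chutes), then the board is ultimately winnable: starting from cell $1$, the chain reaches cell $100$ with probability $1$.
   Context: A Moksha-Patam board consists of the cells $1,\dots,100$ together with a finite set of components; a component is an ordered pair $(a,b)$ of distinct cells, $a$ being its entrance and $b$ its exit; it is a ladder if $a<b$ and a chute if $a>b$. Conventions: distinct components have distinct entrances; no cell is both an entrance and an exit; cells $1$ and $100$ are neither entrances nor exits (components may share exits). The associated Markov chain has state space $\{1,\dots,100\}$ and transition probabilities defined as follows: $p_{100,100}=1$; for $i<100$ and each die value $d\in\{1,\dots,6\}$ (each with probability $1/6$), if $i+d>100$ the chain stays at $i$; otherwise, with $j=i+d$, the chain moves to $b$ if $j$ is the entrance of a component $(j,b)$ and to $j$ otherwise. The game starts at state $1$. The board is ultimately winnable if the chain started at $1$ reaches $100$ with probability $1$. A chute-barrier is a collection of six or more chutes whose entrances are consecutive cells. *)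

theory Defs
  imports Complex_Main
begin

type_synonym board = "(nat \<times> nat) set"

text \<open>A component is a pair (entrance, exit).\<close>

definition valid_board :: "board \<Rightarrow> bool" where
  "valid_board C \<longleftrightarrow> finite C
     \<and> (\<forall>(a,b)\<in>C. a \<in> {1..100} \<and> b \<in> {1..100} \<and> a \<noteq> b)
     \<and> (\<forall>a b b'. (a,b) \<in> C \<and> (a,b') \<in> C \<longrightarrow> b = b')
     \<and> (\<forall>(a,b)\<in>C. \<forall>(a',b')\<in>C. a \<noteq> b')
     \<and> (\<forall>(a,b)\<in>C. a \<noteq> 1 \<and> a \<noteq> 100 \<and> b \<noteq> 1 \<and> b \<noteq> 100)"

definition is_entrance :: "board \<Rightarrow> nat \<Rightarrow> bool" where
  "is_entrance C j \<longleftrightarrow> (\<exists>b. (j,b) \<in> C)"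

definition chute_entrance :: "board \<Rightarrow> nat \<Rightarrow> bool" where
  "chute_entrance C a \<longleftrightarrow> (\<exists>b. (a,b) \<in> C \<and> b < a)"

definition has_chute_barrier :: "board \<Rightarrow> bool" where
  "has_chute_barrier C \<longleftrightarrow> (\<exists>c. \<forall>k<6. chute_entrance C (c + k))"

definition move :: "board \<Rightarrow> nat \<Rightarrow> nat \<Rightarrow> nat" where
  "move C i d = (if i + d > 100 then i
                 else if is_entrance C (i + d) then (THE b. (i + d, b) \<in> C)
                 else i + d)"

definition trans_prob :: "board \<Rightarrow> nat \<Rightarrow> nat \<Rightarrow> real" where
  "trans_prob C i j =
     (if i = 100 then (if j = 100 then 1 else 0)
      else real (card {d \<in> {1..6::nat}. move C i d = j}) / 6)"

fun hit_within :: "board \<Rightarrow> nat \<Rightarrow> nat \<Rightarrow> real" where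
  "hit_within C 0 i = (if i = 100 then 1 else 0)"
| "hit_within C (Suc n) i =
     (if i = 100 then 1 else (\<Sum>j\<in>{1..100}. trans_prob C i j * hit_within C n j))"

text \<open>Ultimately winnable: from cell 1, 100 is reached with probability 1
  (the hitting probability is the limit of the within-n-steps probabilities).\<close>
definition ultimately_winnable :: "board \<Rightarrow> bool" where
  "ultimately_winnable C \<longleftrightarrow> (\<lambda>n. hit_within C n 1) \<longlonglongrightarrow> 1"

end

theory Submission
  imports Defs
begin

text \<open>Without a chute-barrier, from every cell below 100 some die value moves the token strictly
  forward (a chute-free cell among the next six, or cell 100 itself when it is within reach).
  Following such a move at each step reaches 100 from any cell within 99 steps, so in 99 steps
  the chain reaches 100 with probability at least 6^-99 from anywhere.
  Hence the probability of not having reached 100 after 99k steps is at most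
  (1 - 6^-99)^k, which tends to 0.\<close>

lemma move_to_exit:
  assumes "valid_board C" "(i + d, b) \<in> C" "i + d \<le> 100"
  shows "move C i d = b"
proof -
  have "\<And>b'. (i + d, b') \<in> C \<Longrightarrow> b' = b"
    using assms(1,2) unfolding valid_board_def by blast
  then have "(THE b. (i + d, b) \<in> C) = b"
    using assms(2) by blast
  then show ?thesis
    using assms(2,3) by (auto simp: move_def is_entrance_def)
qed

lemma move_not_entrance:
  "\<not> is_entrance C (i + d) \<Longrightarrow> i + d \<le> 100 \<Longrightarrow> move C i d = i + d"
  by (simp add: move_def)

lemma move_in_cells:
  assumes "valid_board C" "i \<in> {1..100}" "d \<in> {1..6}"
  shows "move C i d \<in> {1..100}"
proof (cases "i + d \<le> 100")
  case True
  show ?thesis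
  proof (cases "is_entrance C (i + d)")
    case True
    then obtain b where b: "(i + d, b) \<in> C"
      unfolding is_entrance_def by blast
    then have "b \<in> {1..100}"
      using assms(1) unfolding valid_board_def by blast
    then show ?thesis
      using move_to_exit[OF assms(1) b] \<open>i + d \<le> 100\<close> by simp
  qed (use True assms in \<open>simp add: move_not_entrance\<close>)
qed (use assms in \<open>simp add: move_def\<close>)

lemma move_advances:
  assumes "valid_board C" "\<not> has_chute_barrier C" "i \<in> {1..99}"
  obtains d where "d \<in> {1..6}" "i < move C i d"
proof (cases "94 \<le> i")
  case True
  have "\<not> is_entrance C 100"
    using assms(1) unfolding valid_board_def is_entrance_def by blast
  then have "move C i (100 - i) = 100"
    using assms(3) move_not_entrance[of C i "100 - i"] by simp
  then show ?thesis
    using True assms(3) by (intro that[of "100 - i"]) auto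
next
  case False
  obtain k where k: "k < 6" "\<not> chute_entrance C (i + Suc k)"
    using assms(2) unfolding has_chute_barrier_def by (metis add_Suc_right add_Suc_shift)
  have "i < move C i (Suc k)"
  proof (cases "is_entrance C (i + Suc k)")
    case True
    then obtain b where b: "(i + Suc k, b) \<in> C"
      unfolding is_entrance_def by blast
    have "b \<noteq> i + Suc k"
      using assms(1) b unfolding valid_board_def by blast
    moreover have "\<not> b < i + Suc k"
      using k(2) b unfolding chute_entrance_def by blast
    ultimately show ?thesis
      using move_to_exit[OF assms(1) b] False k(1) by simp
  qed (use False k(1) in \<open>simp add: move_not_entrance\<close>)
  then show ?thesis
    using that[of "Suc k"] k(1) by simp
qed

lemma hit_within_Suc:
  assumes "valid_board C" "i \<in> {1..99}"
  shows "hit_within C (Suc n) i = (\<Sum>d\<in>{1..6}. hit_within C n (move C i d)) / 6"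
proof -
  let ?h = "hit_within C n" and ?m = "move C i"
  have term_eq: "trans_prob C i j * ?h j = (\<Sum>d\<in>{d\<in>{1..6}. ?m d = j}. ?h (?m d)) / 6" for j
  proof -
    have "(\<Sum>d\<in>{d\<in>{1..6}. ?m d = j}. ?h (?m d)) = real (card {d\<in>{1..6::nat}. ?m d = j}) * ?h j"
      by (simp add: sum.cong[where B="{d\<in>{1..6}. ?m d = j}" and h="\<lambda>_. ?h j"])
    then show ?thesis
      using assms(2) by (simp add: trans_prob_def)
  qed
  have "hit_within C (Suc n) i = (\<Sum>j\<in>{1..100}. trans_prob C i j * ?h j)"
    using assms(2) by simp
  also have "\<dots> = (\<Sum>j\<in>{1..100}. \<Sum>d\<in>{d\<in>{1..6}. ?m d = j}. ?h (?m d)) / 6"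
    by (simp only: term_eq sum_divide_distrib)
  also have "(\<Sum>j\<in>{1..100}. \<Sum>d\<in>{d\<in>{1..6}. ?m d = j}. ?h (?m d)) = (\<Sum>d\<in>{1..6}. ?h (?m d))"
    using move_in_cells[OF assms(1)] assms(2) by (intro sum.group) auto
  finally show ?thesis .
qed

lemma hit_within_bounds:
  assumes "valid_board C" "i \<in> {1..100}"
  shows "0 \<le> hit_within C n i \<and> hit_within C n i \<le> 1"
  using assms(2)
proof (induction n arbitrary: i)
  case (Suc n)
  show ?case
  proof (cases "i = 100")
    case False
    then have i: "i \<in> {1..99}"
      using Suc.prems by auto
    have "0 \<le> hit_within C n (move C i d) \<and> hit_within C n (move C i d) \<le> 1" if "d \<in> {1..6}" for d
      using Suc.IH move_in_cells[OF assms(1) Suc.prems that] by blast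
    then have "0 \<le> (\<Sum>d\<in>{1..6::nat}. hit_within C n (move C i d))"
      and "(\<Sum>d\<in>{1..6::nat}. hit_within C n (move C i d)) \<le> (\<Sum>d\<in>{1..6::nat}. 1)"
      by (meson sum_nonneg, meson sum_mono)
    then show ?thesis
      using hit_within_Suc[OF assms(1) i, of n] by (simp del: hit_within.simps)
  qed simp
qed simp

lemma hit_within_mono_Suc:
  assumes "valid_board C" "i \<in> {1..100}"
  shows "hit_within C n i \<le> hit_within C (Suc n) i"
  using assms(2)
proof (induction n arbitrary: i)
  case 0
  then show ?case
    using hit_within_bounds[OF assms(1) 0, of 1] by (cases "i = 100") auto
next
  case (Suc n)
  show ?case
  proof (cases "i = 100")
    case False
    then have i: "i \<in> {1..99}"
      using Suc.prems by auto
    have "(\<Sum>d\<in>{1..6}. hit_within C n (move C i d)) \<le> (\<Sum>d\<in>{1..6}. hit_within C (Suc n) (move C i d))"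
      using Suc.IH move_in_cells[OF assms(1) Suc.prems] by (intro sum_mono) auto
    then show ?thesis
      using hit_within_Suc[OF assms(1) i, of n] hit_within_Suc[OF assms(1) i, of "Suc n"]
      by (simp del: hit_within.simps)
  qed simp
qed

lemma hit_within_mono:
  assumes "valid_board C" "i \<in> {1..100}" "m \<le> n"
  shows "hit_within C m i \<le> hit_within C n i"
  using lift_Suc_mono_le[of "\<lambda>n. hit_within C n i", OF hit_within_mono_Suc[OF assms(1,2)] assms(3)] .

text \<open>Induction on the distance \<open>100 - i\<close>: one advancing die value decreases it, and the other
  five keep the miss probability below \<open>M\<close> by monotonicity.\<close>

lemma miss_within_contract:
  assumes "valid_board C" "\<not> has_chute_barrier C"
    and M: "\<forall>j\<in>{1..100}. 1 - hit_within C n j \<le> M"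
  shows "\<forall>i\<in>{1..100}. 100 - i \<le> r \<longrightarrow> 1 - hit_within C (n + r) i \<le> (1 - (1/6) ^ r) * M"
proof (induction r)
  case 0
  have "hit_within C n 100 = 1"
    by (cases n) auto
  then show ?case
    by auto
next
  case (Suc r)
  have M_nonneg: "0 \<le> M"
    using M hit_within_bounds[OF assms(1), of 1 n] by force
  show ?case
  proof (intro ballI impI)
    fix i assume i: "i \<in> {1..100}" "100 - i \<le> Suc r"
    show "1 - hit_within C (n + Suc r) i \<le> (1 - (1/6) ^ Suc r) * M"
    proof (cases "i = 100")
      case True
      have "(1/6::real) ^ Suc r \<le> 1"
        by (rule power_le_one) auto
      then show ?thesis
        using True M_nonneg by simp
    next
      case False
      then have i99: "i \<in> {1..99}"
        using i by auto
      obtain d0 where d0: "d0 \<in> {1..6}" "i < move C i d0"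
        using move_advances[OF assms(1,2) i99] .
      let ?miss = "\<lambda>d. 1 - hit_within C (n + r) (move C i d)"
      have miss_le_M: "?miss d \<le> M" if "d \<in> {1..6}" for d
        using M move_in_cells[OF assms(1) i(1) that]
          hit_within_mono[OF assms(1) move_in_cells[OF assms(1) i(1) that], of n "n + r"] by force
      have "(\<Sum>d\<in>{1..6}. ?miss d) = ?miss d0 + (\<Sum>d\<in>{1..6} - {d0}. ?miss d)"
        using d0(1) by (simp add: sum.remove)
      also have "\<dots> \<le> (1 - (1/6) ^ r) * M + (\<Sum>d\<in>{1..6::nat} - {d0}. M)"
        using Suc.IH move_in_cells[OF assms(1) i(1) d0(1)] d0(2) i(2) miss_le_M
        by (intro add_mono sum_mono) auto
      also have "\<dots> = (1 - (1/6) ^ r) * M + 5 * M"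
        using d0(1) by simp
      finally have miss_sum: "(\<Sum>d\<in>{1..6}. ?miss d) \<le> (1 - (1/6) ^ r) * M + 5 * M" .
      have "1 - hit_within C (n + Suc r) i = (\<Sum>d\<in>{1..6}. ?miss d) / 6"
        using hit_within_Suc[OF assms(1) i99, of "n + r"]
        by (simp add: sum_subtractf del: hit_within.simps)
      also have "\<dots> \<le> ((1 - (1/6) ^ r) * M + 5 * M) / 6"
        using miss_sum by (rule divide_right_mono) simp
      also have "\<dots> = (1 - (1/6) ^ Suc r) * M"
        by (simp add: field_simps)
      finally show ?thesis .
    qed
  qed
qed

lemma miss_within_geometric:
  assumes "valid_board C" "\<not> has_chute_barrier C" "i \<in> {1..100}"
  shows "1 - hit_within C (99 * k) i \<le> (1 - (1/6) ^ 99) ^ k"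
  using assms(3)
proof (induction k arbitrary: i)
  case 0
  then show ?case
    using hit_within_bounds[OF assms(1) 0, of 0] by simp
next
  case (Suc k)
  have "100 - i \<le> 99"
    using Suc.prems by auto
  then have "1 - hit_within C (99 * k + 99) i \<le> (1 - (1/6) ^ 99) * (1 - (1/6) ^ 99) ^ k"
    using miss_within_contract[OF assms(1,2), of "99 * k", OF ballI[OF Suc.IH], of 99] Suc.prems
    by blast
  then show ?case
    by (simp add: mult_Suc_right add.commute)
qed

theorem mainTheorem6:
  assumes "valid_board C"
    and "\<not> has_chute_barrier C"
  shows "ultimately_winnable C"
proof -
  define c :: real where "c = 1 - (1/6) ^ 99"
  have "0 \<le> c" "c < 1"
    unfolding c_def by (simp_all add: power_le_one)
  then have "(\<lambda>n. c ^ (n div 99)) \<longlonglongrightarrow> 0"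
    by (intro filterlim_compose[OF LIMSEQ_power_zero filterlim_at_top_div_const_nat]) auto
  then have lower: "(\<lambda>n. 1 - c ^ (n div 99)) \<longlonglongrightarrow> 1"
    by (intro tendsto_eq_intros) auto
  have one: "(1::nat) \<in> {1..100}"
    by simp
  have "1 - c ^ (n div 99) \<le> hit_within C n 1" for n
    using miss_within_geometric[OF assms one, of "n div 99"]
      hit_within_mono[OF assms(1) one, of "99 * (n div 99)" n] unfolding c_def by simp
  moreover have "hit_within C n 1 \<le> 1" for n
    using hit_within_bounds[OF assms(1) one] by blast
  ultimately show ?thesis
    unfolding ultimately_winnable_def
    by (intro tendsto_sandwich[OF _ _ lower tendsto_const]) auto
qed

end
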